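(* Let $K$ be a nonempty compact Hausdorff topological space and let $X$ be a real Banach space. Then $X$ has the property $( ** )$ if and only if $C(K,X)$ has the property $( ** )$.
   Context: All Banach spaces are real. For a Banach space $Z$, $B_Z$, $S_Z$ and $Z^*$ denote its closed unit ball, unit sphere and dual. For $z^*\in S_{Z^*}$ and $0<\alpha<1$, the slice is $S(z^*,\alpha)=\{z\in B_Z: z^*(z)>1-\alpha\}$, and $-S(z^*,\alpha)=\{-z: z\in S(z^*,\alpha)\}$. A Banach space $Z$ has the property $( ** )$ if for all $z_1,z_2\in S_Z$ and every $\varepsilon>0$ there exists $z^*\in S_{Z^*}$ such that, writing $S=S(z^*,\varepsilon)$, one has $z_1\in S$ and $\operatorname{dist}(z_2,S)+\operatorname{dist}(z_2,-S)<2+\varepsilon$. $C(K,X)$ is the Banach space of all continuous functions $K\to X$ with the supremum norm. *)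

theory Defs
  imports "HOL-Analysis.Analysis"
begin

definition slice :: "('a::real_normed_vector \<Rightarrow> real) \<Rightarrow> real \<Rightarrow> 'a set" where
  "slice f \<alpha> = {z. norm z \<le> 1 \<and> f z > 1 - \<alpha>}"

text \<open>Property (**) of a normed space Z (given as a type).
  Elements of the unit sphere of the dual are bounded linear functionals of operator norm 1.\<close>
definition prop_ss :: "'a::real_normed_vector itself \<Rightarrow> bool" where
  "prop_ss (_::'a itself) \<longleftrightarrow>
     (\<forall>z1 z2 :: 'a. norm z1 = 1 \<longrightarrow> norm z2 = 1 \<longrightarrow>
        (\<forall>\<epsilon>>0. \<exists>f :: 'a \<Rightarrow> real. bounded_linear f \<and> onorm f = 1 \<and>
            z1 \<in> slice f \<epsilon> \<and>
            infdist z2 (slice f \<epsilon>) + infdist z2 (uminus ` slice f \<epsilon>) < 2 + \<epsilon>))"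

end

theory Submission
  imports Defs
begin

text \<open>
  From \<open>X\<close> to \<open>C(K, X)\<close>: let \<open>z1\<close> attain its norm at \<open>t0\<close>. Property (**) of \<open>X\<close> for
  \<open>z1 t0\<close> and the normalisation of \<open>z2 t0\<close> gives a functional \<open>f\<close>; then \<open>h \<mapsto> f (h t0)\<close>
  works for \<open>z1, z2\<close>, because any point of the slice of \<open>f\<close> can be made the value at \<open>t0\<close> of a
  function of norm at most 1 close to \<open>z2\<close>, and shrinking \<open>z2 t0\<close> towards \<open>0\<close> only helps
  as the slices lie in the unit ball.

  From \<open>C(K, X)\<close> to \<open>X\<close>: apply (**) to the constant functions \<open>x1, x2\<close> and pick nearly optimal
  \<open>h\<close> and \<open>-k\<close> in the slice and its negative. On a partition of unity \<open>(w i)\<close> subordinate to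
  small oscillation of \<open>h\<close> and \<open>k\<close>, the functional \<open>F\<close> splits into the functionals
  \<open>x \<mapsto> F (w i \<cdot> x)\<close> on \<open>X\<close>, whose norms add up to at most 1. As \<open>F\<close> nearly norms \<open>x1, h, k\<close>,
  by pigeonhole one of them, normalised, nearly norms \<open>x1, h i, k i\<close>, and it does the job.
\<close>

lemma infdist_lessE:
  assumes "A \<noteq> {}" "infdist x A < r"
  obtains a where "a \<in> A" "dist x a < r"
  using assms by (auto simp: infdist_notempty cINF_less_iff)

lemma infdist_add_lessE:
  assumes "A \<noteq> {}" "B \<noteq> {}" "infdist x A + infdist y B < r"
  obtains a b where "a \<in> A" "b \<in> B" "dist x a + dist y b < r"
proof -
  define \<gamma> where "\<gamma> = r - (infdist x A + infdist y B)"
  have "\<gamma> > 0" using assms(3) by (simp add: \<gamma>_def)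
  then obtain a b where a: "a \<in> A" "dist x a < infdist x A + \<gamma> / 2"
    and b: "b \<in> B" "dist y b < infdist y B + \<gamma> / 2"
    using infdist_lessE[OF assms(1), of x] infdist_lessE[OF assms(2), of y]
    by (metis half_gt_zero less_add_same_cancel1)
  have "dist x a + dist y b < r" using a(2) b(2) \<gamma>_def by linarith
  with a(1) b(1) show ?thesis by (rule that)
qed

lemma infdist_scaleR_le:
  fixes S :: "'a::real_normed_vector set"
  assumes S: "\<forall>u\<in>S. norm u \<le> 1" and r: "0 \<le> r" "r \<le> 1"
  shows "infdist (r *\<^sub>R x) S \<le> r * infdist x S + (1 - r)"
proof (cases "S = {}")
  case True
  then show ?thesis using r infdist_nonneg[of x S] by (simp add: infdist_def)
next
  case False
  show ?thesis
  proof (rule field_le_epsilon)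
    fix e :: real assume "0 < e"
    then obtain u where u: "u \<in> S" "dist x u < infdist x S + e"
      using infdist_lessE[OF False] by (metis less_add_same_cancel1)
    have "r *\<^sub>R x - u = r *\<^sub>R (x - u) - (1 - r) *\<^sub>R u"
      by (simp add: algebra_simps)
    then have "dist (r *\<^sub>R x) u \<le> r * dist x u + (1 - r) * norm u"
      using r norm_triangle_ineq4[of "r *\<^sub>R (x - u)" "(1 - r) *\<^sub>R u"]
      by (simp add: dist_norm)
    also have "\<dots> \<le> r * (infdist x S + e) + (1 - r)"
      using u S r by (intro add_mono mult_left_mono mult_left_le) auto
    also have "\<dots> \<le> r * infdist x S + (1 - r) + e"
      using r \<open>0 < e\<close> by (simp add: algebra_simps mult_left_le_one_le)
    finally show "infdist (r *\<^sub>R x) S \<le> r * infdist x S + (1 - r) + e"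
      using infdist_le[OF u(1), of "r *\<^sub>R x"] by linarith
  qed
qed

lemma bounded_linear_le_onorm:
  fixes f :: "'a::real_normed_vector \<Rightarrow> real"
  assumes "bounded_linear f" "norm x \<le> 1"
  shows "f x \<le> onorm f"
proof -
  have "\<bar>f x\<bar> \<le> onorm f * norm x" using onorm[OF assms(1)] by simp
  also have "\<dots> \<le> onorm f"
    using assms(2) onorm_pos_le[OF assms(1)] by (simp add: mult_left_le)
  finally show ?thesis by simp
qed

lemma onorm_approxE:
  fixes f :: "'a::real_normed_vector \<Rightarrow> real"
  assumes bl: "bounded_linear f" and e: "e > 0"
  obtains x where "norm x \<le> 1" "f x > onorm f - e"
proof (cases "onorm f - e < 0")
  case True
  then show ?thesis using that[of 0] linear_0[OF bounded_linear.linear[OF bl]] by simp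
next
  case False
  have bdd: "bdd_above (range (\<lambda>x. norm (f x) / norm x))"
    using le_onorm[OF bl] by (auto intro!: bdd_aboveI2)
  have "onorm f - e < onorm f" using e by simp
  then obtain x where x: "onorm f - e < norm (f x) / norm x"
    unfolding onorm_def using less_cSUP_iff[OF UNIV_not_empty bdd] by blast
  with False have "norm x > 0" by auto
  have lin: "linear f" using bl bounded_linear.linear by blast
  have "f (x /\<^sub>R norm x) = f x / norm x" "f (- (x /\<^sub>R norm x)) = - f x / norm x"
    using linear_scale[OF lin] linear_neg[OF lin] by (simp_all add: divide_inverse_commute)
  then show ?thesis
    using that[of "x /\<^sub>R norm x"] that[of "- (x /\<^sub>R norm x)"] x \<open>norm x > 0\<close>
    by (cases "f x \<ge> 0") auto
qed

lemma uminus_slice: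
  assumes "linear f"
  shows "uminus ` slice f \<alpha> = slice (\<lambda>x. - f x) \<alpha>"
proof (intro set_eqI iffI)
  fix x assume "x \<in> uminus ` slice f \<alpha>"
  then obtain y where "y \<in> slice f \<alpha>" "x = - y" by blast
  then show "x \<in> slice (\<lambda>x. - f x) \<alpha>" by (simp add: slice_def linear_neg[OF assms])
next
  fix x assume "x \<in> slice (\<lambda>x. - f x) \<alpha>"
  then have "- x \<in> slice f \<alpha>" by (simp add: slice_def linear_neg[OF assms])
  then show "x \<in> uminus ` slice f \<alpha>" by (rule rev_image_eqI) simp
qed

lemma apply_bcontfun_sum:
  "apply_bcontfun (sum f A) t = (\<Sum>i\<in>A. apply_bcontfun (f i) t)"
  for f :: "'i \<Rightarrow> ('a::topological_space, 'b::real_normed_vector) bcontfun"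
  by (induction A rule: infinite_finite_induct) auto

lemma norm_const_bcontfun:
  "norm (const_bcontfun c :: ('a::topological_space, 'b::real_normed_vector) bcontfun) = norm c"
  using norm_bound[of "const_bcontfun c :: ('a, 'b) bcontfun" "norm c"]
        norm_bounded[of "const_bcontfun c :: ('a, 'b) bcontfun" undefined]
  by simp

lemma bcontfun_norm_attained:
  fixes z :: "('a::topological_space, 'b::real_normed_vector) bcontfun"
  assumes "compact (UNIV :: 'a set)"
  obtains t where "norm (z t) = norm z"
proof -
  have "continuous_on UNIV (\<lambda>t. norm (z t))" by (intro continuous_intros) auto
  then obtain t where t: "\<forall>s. norm (z s) \<le> norm (z t)"
    using continuous_attains_sup[OF assms] by blast
  have "norm z \<le> norm (z t)" by (rule norm_bound) (use t in auto)
  then show ?thesis using that[of t] norm_bounded[of z t] by simp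
qed

lemma bounded_linear_apply_bcontfun:
  "bounded_linear (\<lambda>h::('a::topological_space, 'b::real_normed_vector) bcontfun. h t)"
  by (rule bounded_linear_intro[where K=1]) (auto simp: norm_bounded)

lemma onorm_comp_apply_bcontfun:
  fixes f :: "'b::real_normed_vector \<Rightarrow> real"
  assumes f: "bounded_linear f"
  shows "onorm (\<lambda>h::('a::topological_space, 'b) bcontfun. f (h t)) = onorm f"
    (is "onorm ?F = _")
proof (rule antisym)
  have F: "bounded_linear ?F"
    by (rule bounded_linear_compose[OF f bounded_linear_apply_bcontfun])
  show "onorm ?F \<le> onorm f"
  proof (rule onorm_bound)
    fix h :: "('a, 'b) bcontfun"
    have "norm (f (h t)) \<le> onorm f * norm (h t)" by (rule onorm[OF f])
    also have "\<dots> \<le> onorm f * norm h"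
      by (rule mult_left_mono[OF norm_bounded onorm_pos_le[OF f]])
    finally show "norm (?F h) \<le> onorm f * norm h" .
  qed (rule onorm_pos_le[OF f])
  show "onorm f \<le> onorm ?F"
  proof (rule onorm_bound)
    fix x
    have "norm (f x) = norm (?F (const_bcontfun x))" by simp
    also have "\<dots> \<le> onorm ?F * norm (const_bcontfun x :: ('a, 'b) bcontfun)"
      by (rule onorm[OF F])
    finally show "norm (f x) \<le> onorm ?F * norm x" by (simp add: norm_const_bcontfun)
  qed (rule onorm_pos_le[OF F])
qed

text \<open>Interpolate between \<open>z\<close> and the constant \<open>u\<close> on the set where \<open>z\<close> is \<open>\<delta>\<close>-close to \<open>z t0\<close>.\<close>
lemma bcontfun_move_value:
  fixes z :: "('a::topological_space, 'b::real_normed_vector) bcontfun"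
  assumes z: "norm z \<le> 1" and u: "norm u \<le> 1" and d: "\<delta> > 0"
  obtains h :: "('a, 'b) bcontfun" where "norm h \<le> 1" "h t0 = u" "dist z h \<le> norm (z t0 - u) + \<delta>"
proof -
  define \<phi> where "\<phi> t = max 0 (1 - norm (z t - z t0) / \<delta>)" for t
  define f where "f t = \<phi> t *\<^sub>R u + (1 - \<phi> t) *\<^sub>R z t" for t
  have \<phi>01: "0 \<le> \<phi> t" "\<phi> t \<le> 1" for t
    using d by (auto simp: \<phi>_def)
  have "continuous_on UNIV f"
    unfolding f_def \<phi>_def using d by (intro continuous_intros) auto
  moreover have nf: "norm (f t) \<le> 1" for t
  proof -
    have "norm (f t) \<le> norm (\<phi> t *\<^sub>R u) + norm ((1 - \<phi> t) *\<^sub>R z t)"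
      unfolding f_def by (rule norm_triangle_ineq)
    also have "\<dots> = \<phi> t * norm u + (1 - \<phi> t) * norm (z t)"
      using \<phi>01[of t] by simp
    also have "\<dots> \<le> \<phi> t * 1 + (1 - \<phi> t) * 1"
      using \<phi>01[of t] u order_trans[OF norm_bounded z]
      by (intro add_mono mult_left_mono) auto
    finally show ?thesis by simp
  qed
  ultimately have hf: "apply_bcontfun (Bcontfun f) = f"
    by (intro Bcontfun_inverse bcontfun_normI)
  show thesis
  proof (rule that[of "Bcontfun f"])
    show "norm (Bcontfun f) \<le> 1" by (rule norm_bound) (simp add: hf nf)
    show "Bcontfun f t0 = u" by (simp add: hf f_def \<phi>_def)
    show "dist z (Bcontfun f) \<le> norm (z t0 - u) + \<delta>"
    proof (rule dist_bound)
      fix t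
      have "norm (z t - f t) = \<phi> t * norm (z t - u)"
        using \<phi>01[of t] by (simp add: f_def algebra_simps flip: scaleR_diff_right)
      also have "\<dots> \<le> norm (z t0 - u) + \<delta>"
      proof (cases "\<phi> t = 0")
        case False
        then have "norm (z t - z t0) < \<delta>" using d
          by (auto simp: \<phi>_def max_def field_simps split: if_splits)
        then have "norm (z t - u) \<le> norm (z t0 - u) + \<delta>"
          using norm_triangle_ineq[of "z t - z t0" "z t0 - u"] by simp
        then show ?thesis using \<phi>01[of t]
          by (meson mult_left_le_one_le norm_ge_zero order_trans)
      qed (use d in simp)
      finally show "dist (z t) (Bcontfun f t) \<le> norm (z t0 - u) + \<delta>"
        by (simp add: hf dist_norm)
    qed
  qed
qed

lemma infdist_slice_apply_bcontfun_le:
  fixes z :: "('a::topological_space, 'b::real_normed_vector) bcontfun"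
  assumes f: "bounded_linear f" and z: "norm z \<le> 1"
  shows "infdist z (slice (\<lambda>h::('a, 'b) bcontfun. f (h t)) \<alpha>) \<le> infdist (z t) (slice f \<alpha>)"
proof (cases "slice f \<alpha> = {}")
  case True
  have "slice (\<lambda>h::('a, 'b) bcontfun. f (h t)) \<alpha> = {}"
  proof (rule equals0I)
    fix h :: "('a, 'b) bcontfun" assume "h \<in> slice (\<lambda>h::('a, 'b) bcontfun. f (h t)) \<alpha>"
    then have "h t \<in> slice f \<alpha>" using order_trans[OF norm_bounded[of h t]] by (simp add: slice_def)
    with True show False by simp
  qed
  with True show ?thesis by (simp add: infdist_def)
next
  case False
  show ?thesis
  proof (rule field_le_epsilon)
    fix e :: real assume "0 < e"
    then obtain u where u: "u \<in> slice f \<alpha>" "dist (z t) u < infdist (z t) (slice f \<alpha>) + e/2"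
      using infdist_lessE[OF False] by (metis half_gt_zero less_add_same_cancel1)
    then have "norm u \<le> 1" by (simp add: slice_def)
    then obtain h :: "('a, 'b) bcontfun" where h: "norm h \<le> 1" "h t = u" "dist z h \<le> norm (z t - u) + e/2"
      using bcontfun_move_value[OF z _ half_gt_zero[OF \<open>0 < e\<close>]] by metis
    with u(1) have "h \<in> slice (\<lambda>h::('a, 'b) bcontfun. f (h t)) \<alpha>" by (simp add: slice_def)
    then have "infdist z (slice (\<lambda>h::('a, 'b) bcontfun. f (h t)) \<alpha>) \<le> dist z h" by (rule infdist_le)
    then show "infdist z (slice (\<lambda>h::('a, 'b) bcontfun. f (h t)) \<alpha>) \<le> infdist (z t) (slice f \<alpha>) + e"
      using h(3) u(2) by (simp add: dist_norm)
  qed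
qed

lemma prop_ss_bcontfun:
  assumes K: "compact (UNIV :: 'a::topological_space set)"
    and X: "prop_ss TYPE('b::real_normed_vector)"
  shows "prop_ss TYPE(('a, 'b) bcontfun)"
  unfolding prop_ss_def
proof (intro allI impI)
  fix z1 z2 :: "('a, 'b) bcontfun" and \<epsilon> :: real
  assume n1: "norm z1 = 1" and n2: "norm z2 = 1" and \<epsilon>: "\<epsilon> > 0"
  obtain t where t: "norm (z1 t) = 1" using bcontfun_norm_attained[OF K, of z1] n1 by metis
  define r where "r = norm (z2 t)"
  have r: "0 \<le> r" "r \<le> 1" using norm_bounded[of z2 t] n2 by (auto simp: r_def)
  define x where "x = (if z2 t = 0 then z1 t else z2 t /\<^sub>R r)"
  have x: "norm x = 1" "z2 t = r *\<^sub>R x" using t by (auto simp: x_def r_def)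
  from X[unfolded prop_ss_def, rule_format, OF t x(1) \<epsilon>] obtain f :: "'b \<Rightarrow> real" where
    f: "bounded_linear f" "onorm f = 1" and f_z1: "z1 t \<in> slice f \<epsilon>"
    and f_x: "infdist x (slice f \<epsilon>) + infdist x (uminus ` slice f \<epsilon>) < 2 + \<epsilon>"
    by blast
  define F where "F = (\<lambda>h::('a, 'b) bcontfun. f (h t))"
  have F: "bounded_linear F" unfolding F_def
    by (rule bounded_linear_compose[OF f(1) bounded_linear_apply_bcontfun])
  have minus_f: "bounded_linear (\<lambda>x. - f x)" by (rule bounded_linear_minus[OF f(1)])
  have ball: "\<forall>u\<in>slice f \<epsilon>. norm u \<le> 1" "\<forall>u\<in>uminus ` slice f \<epsilon>. norm u \<le> 1"
    by (auto simp: slice_def)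
  have "infdist z2 (slice F \<epsilon>) + infdist z2 (uminus ` slice F \<epsilon>)
      = infdist z2 (slice (\<lambda>h::('a, 'b) bcontfun. f (h t)) \<epsilon>) + infdist z2 (slice (\<lambda>h::('a, 'b) bcontfun. - f (h t)) \<epsilon>)"
    using uminus_slice[OF bounded_linear.linear[OF F]] by (simp add: F_def)
  also have "\<dots> \<le> infdist (z2 t) (slice f \<epsilon>) + infdist (z2 t) (uminus ` slice f \<epsilon>)"
    using infdist_slice_apply_bcontfun_le[OF f(1), of z2 t \<epsilon>]
      infdist_slice_apply_bcontfun_le[OF minus_f, of z2 t \<epsilon>]
      uminus_slice[OF bounded_linear.linear[OF f(1)]] n2
    by simp
  also have "\<dots> \<le> r * (infdist x (slice f \<epsilon>) + infdist x (uminus ` slice f \<epsilon>)) + 2 * (1 - r)"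
  proof -
    have "infdist (z2 t) (slice f \<epsilon>) \<le> r * infdist x (slice f \<epsilon>) + (1 - r)"
      unfolding x(2) by (rule infdist_scaleR_le[OF ball(1) r])
    moreover have "infdist (z2 t) (uminus ` slice f \<epsilon>) \<le> r * infdist x (uminus ` slice f \<epsilon>) + (1 - r)"
      unfolding x(2) by (rule infdist_scaleR_le[OF ball(2) r])
    ultimately show ?thesis by (simp add: distrib_left)
  qed
  also have "\<dots> < 2 + \<epsilon>"
  proof -
    have "r * (infdist x (slice f \<epsilon>) + infdist x (uminus ` slice f \<epsilon>)) + (1 - r) * 2 < 2 + \<epsilon>"
      by (rule convex_bound_lt[OF f_x]) (use r \<epsilon> in auto)
    then show ?thesis by linarith
  qed
  finally have "infdist z2 (slice F \<epsilon>) + infdist z2 (uminus ` slice F \<epsilon>) < 2 + \<epsilon>" .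
  moreover have "onorm F = 1" using onorm_comp_apply_bcontfun[OF f(1)] f(2) by (simp add: F_def)
  moreover have "z1 \<in> slice F \<epsilon>" using f_z1 n1 by (simp add: slice_def F_def)
  ultimately show "\<exists>F. bounded_linear F \<and> onorm F = 1 \<and> z1 \<in> slice F \<epsilon> \<and>
      infdist z2 (slice F \<epsilon>) + infdist z2 (uminus ` slice F \<epsilon>) < 2 + \<epsilon>"
    using F by (intro exI[of _ F] conjI)
qed

definition partition_of_unity :: "'i set \<Rightarrow> ('i \<Rightarrow> 'a::topological_space \<Rightarrow> real) \<Rightarrow> bool" where
  "partition_of_unity T w \<longleftrightarrow> finite T \<and>
     (\<forall>i\<in>T. continuous_on UNIV (w i) \<and> (\<forall>t. 0 \<le> w i t)) \<and> (\<forall>t. (\<Sum>i\<in>T. w i t) = 1)"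

lemma partition_of_unity_le_one:
  assumes "partition_of_unity T w" "i \<in> T"
  shows "w i t \<le> 1"
proof -
  have "w i t \<le> (\<Sum>j\<in>T. w j t)"
    using assms by (intro member_le_sum) (auto simp: partition_of_unity_def)
  then show ?thesis using assms(1) by (simp add: partition_of_unity_def)
qed

lemma exists_partition_of_unity_dist:
  fixes f :: "'a::topological_space \<Rightarrow> 'm::metric_space"
  assumes K: "compact (UNIV :: 'a set)" and f: "continuous_on UNIV f" and \<delta>: "\<delta> > 0"
  obtains T w where "partition_of_unity T w"
    "\<And>i t. i \<in> T \<Longrightarrow> w i t > 0 \<Longrightarrow> dist (f t) (f i) < \<delta>"
proof -
  have cont_dist: "continuous_on UNIV (\<lambda>t. dist (f t) (f i))" for i
    by (intro continuous_intros f)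
  have "open {t. dist (f t) (f i) < \<delta>}" for i
    by (rule open_Collect_less[OF cont_dist continuous_on_const])
  moreover have "UNIV \<subseteq> (\<Union>i. {t. dist (f t) (f i) < \<delta>})" using \<delta> by auto
  ultimately obtain T where T: "finite T" "UNIV \<subseteq> (\<Union>i\<in>T. {t. dist (f t) (f i) < \<delta>})"
    using compactE_image[OF K] by (metis subset_UNIV)
  define \<psi> where "\<psi> i t = max 0 (\<delta> - dist (f t) (f i))" for i t
  define \<sigma> where "\<sigma> t = (\<Sum>i\<in>T. \<psi> i t)" for t
  have \<sigma>_pos: "\<sigma> t > 0" for t
  proof -
    obtain i where "i \<in> T" "dist (f t) (f i) < \<delta>" using T(2) by blast
    moreover have "\<psi> i t \<le> \<sigma> t"
      unfolding \<sigma>_def using \<open>i \<in> T\<close> T(1) by (intro member_le_sum) (auto simp: \<psi>_def)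
    ultimately show ?thesis by (simp add: \<psi>_def)
  qed
  show thesis
  proof (rule that[of T "\<lambda>i t. \<psi> i t / \<sigma> t"])
    have "continuous_on UNIV (\<lambda>t. \<psi> i t / \<sigma> t)" for i
      unfolding \<sigma>_def \<psi>_def using \<sigma>_pos[unfolded \<sigma>_def \<psi>_def]
      by (intro continuous_intros cont_dist) (auto simp: less_imp_neq[symmetric])
    moreover have "(\<Sum>i\<in>T. \<psi> i t / \<sigma> t) = 1" for t
      using \<sigma>_pos[of t] by (simp add: \<sigma>_def flip: sum_divide_distrib)
    ultimately show "partition_of_unity T (\<lambda>i t. \<psi> i t / \<sigma> t)"
      using T(1) \<sigma>_pos by (auto simp: partition_of_unity_def \<psi>_def intro!: divide_nonneg_pos)
    show "dist (f t) (f i) < \<delta>" if "\<psi> i t / \<sigma> t > 0" for i t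
      using that \<sigma>_pos[of t] by (auto simp: \<psi>_def zero_less_divide_iff)
  qed
qed

definition weighted_bcontfun :: "('a::topological_space \<Rightarrow> real) \<Rightarrow> 'b::real_normed_vector \<Rightarrow> ('a, 'b) bcontfun" where
  "weighted_bcontfun w x = Bcontfun (\<lambda>t. w t *\<^sub>R x)"

lemma apply_weighted_bcontfun:
  assumes "continuous_on UNIV w" "\<And>t. \<bar>w t\<bar> \<le> 1"
  shows "apply_bcontfun (weighted_bcontfun w x) = (\<lambda>t. w t *\<^sub>R x)"
  unfolding weighted_bcontfun_def
proof (intro Bcontfun_inverse bcontfun_normI)
  show "continuous_on UNIV (\<lambda>t. w t *\<^sub>R x)" using assms(1) by (intro continuous_intros)
  show "norm (w t *\<^sub>R x) \<le> norm x" for t using assms(2)[of t] by (simp add: mult_left_le_one_le)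
qed

lemma bounded_linear_weighted_bcontfun:
  assumes "continuous_on UNIV w" "\<And>t. \<bar>w t\<bar> \<le> 1"
  shows "bounded_linear (weighted_bcontfun w :: 'b::real_normed_vector \<Rightarrow> ('a::topological_space, 'b) bcontfun)"
proof (rule bounded_linear_intro[where K=1])
  note ap = apply_weighted_bcontfun[OF assms]
  show "weighted_bcontfun w (x + y) = weighted_bcontfun w x + weighted_bcontfun w y" for x y :: 'b
    by (rule bcontfun_eqI) (simp add: ap scaleR_right_distrib)
  show "weighted_bcontfun w (r *\<^sub>R x) = r *\<^sub>R weighted_bcontfun w x" for r and x :: 'b
    by (rule bcontfun_eqI) (simp add: ap)
  show "norm (weighted_bcontfun w x :: ('a, 'b) bcontfun) \<le> norm x * 1" for x :: 'b
    using assms(2) by (simp, intro norm_bound) (simp add: ap mult_left_le_one_le)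
qed

lemma partition_of_unity_weight:
  assumes "partition_of_unity T w" "i \<in> T"
  shows "continuous_on UNIV (w i)" "0 \<le> w i t" "\<bar>w i t\<bar> \<le> 1"
  using assms partition_of_unity_le_one[OF assms] by (auto simp: partition_of_unity_def)

lemma apply_sum_weighted_bcontfun:
  assumes "partition_of_unity T w"
  shows "apply_bcontfun (\<Sum>i\<in>T. weighted_bcontfun (w i) (y i)) t = (\<Sum>i\<in>T. w i t *\<^sub>R y i)"
  unfolding apply_bcontfun_sum
proof (intro sum.cong refl)
  fix i assume "i \<in> T"
  then show "apply_bcontfun (weighted_bcontfun (w i) (y i)) t = w i t *\<^sub>R y i"
    by (simp add: apply_weighted_bcontfun[OF partition_of_unity_weight(1,3)[OF assms]])
qed

lemma norm_sum_weighted_bcontfun_le: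
  fixes y :: "'i \<Rightarrow> 'b::real_normed_vector"
  assumes w: "partition_of_unity T w" and y: "\<And>i. i \<in> T \<Longrightarrow> norm (y i) \<le> 1"
  shows "norm (\<Sum>i\<in>T. weighted_bcontfun (w i) (y i) :: ('a::topological_space, 'b) bcontfun) \<le> 1"
proof (rule norm_bound)
  fix t
  have "norm (\<Sum>i\<in>T. w i t *\<^sub>R y i) \<le> (\<Sum>i\<in>T. norm (w i t *\<^sub>R y i))" by (rule norm_sum)
  also have "\<dots> \<le> (\<Sum>i\<in>T. w i t)"
    using partition_of_unity_weight(2)[OF w] y by (intro sum_mono) (simp add: mult_left_le)
  finally show "norm ((\<Sum>i\<in>T. weighted_bcontfun (w i) (y i)) t) \<le> 1"
    using w by (simp add: apply_sum_weighted_bcontfun partition_of_unity_def)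
qed

lemma norm_diff_sum_weighted_bcontfun_le:
  fixes z :: "('a::topological_space, 'b::real_normed_vector) bcontfun"
  assumes w: "partition_of_unity T w"
    and osc: "\<And>i t. i \<in> T \<Longrightarrow> w i t > 0 \<Longrightarrow> dist (z t) (z i) \<le> \<eta>"
  shows "norm (z - (\<Sum>i\<in>T. weighted_bcontfun (w i) (z i))) \<le> \<eta>"
proof (rule norm_bound)
  fix t
  have "z t = (\<Sum>i\<in>T. w i t) *\<^sub>R z t" using w by (simp add: partition_of_unity_def)
  then have "z t - (\<Sum>i\<in>T. w i t *\<^sub>R z i) = (\<Sum>i\<in>T. w i t *\<^sub>R (z t - z i))"
    by (simp add: scaleR_sum_left sum_subtractf scaleR_diff_right)
  then have "norm (z t - (\<Sum>i\<in>T. w i t *\<^sub>R z i)) \<le> (\<Sum>i\<in>T. norm (w i t *\<^sub>R (z t - z i)))"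
    by (simp only:) (rule norm_sum)
  also have "\<dots> \<le> (\<Sum>i\<in>T. w i t * \<eta>)"
  proof (rule sum_mono)
    fix i assume i: "i \<in> T"
    show "norm (w i t *\<^sub>R (z t - z i)) \<le> w i t * \<eta>"
      using partition_of_unity_weight(2)[OF w i, of t] osc[OF i, of t]
      by (cases "w i t = 0") (auto simp: dist_norm intro: mult_left_mono)
  qed
  also have "\<dots> = \<eta>" using w by (simp add: partition_of_unity_def flip: sum_distrib_right)
  finally show "norm ((z - (\<Sum>i\<in>T. weighted_bcontfun (w i) (z i))) t) \<le> \<eta>"
    using w by (simp add: apply_sum_weighted_bcontfun)
qed

lemma bounded_linear_comp_weighted_bcontfun:
  fixes F :: "('a::topological_space, 'b::real_normed_vector) bcontfun \<Rightarrow> real"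
  assumes "partition_of_unity T w" "i \<in> T" "bounded_linear F"
  shows "bounded_linear (\<lambda>x. F (weighted_bcontfun (w i) x))"
  using bounded_linear_compose[OF assms(3) bounded_linear_weighted_bcontfun]
    partition_of_unity_weight(1,3)[OF assms(1,2)] by blast

lemma sum_onorm_comp_weighted_bcontfun_le:
  fixes F :: "('a::topological_space, 'b::real_normed_vector) bcontfun \<Rightarrow> real"
  assumes w: "partition_of_unity T w" and F: "bounded_linear F"
  shows "(\<Sum>i\<in>T. onorm (\<lambda>x. F (weighted_bcontfun (w i) x))) \<le> onorm F"
proof (rule field_le_epsilon)
  fix e :: real assume e: "0 < e"
  define g where "g i = (\<lambda>x. F (weighted_bcontfun (w i) x))" for i
  have g: "bounded_linear (g i)" if "i \<in> T" for i
    unfolding g_def by (rule bounded_linear_comp_weighted_bcontfun[OF w that F])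
  have T: "finite T" "T \<noteq> {}" using w by (auto simp: partition_of_unity_def)
  then have e': "e / card T > 0" using e by (simp add: card_gt_0_iff)
  have "\<forall>i\<in>T. \<exists>y. norm y \<le> 1 \<and> g i y > onorm (g i) - e / card T"
    using onorm_approxE[OF g e'] by metis
  then obtain y where y: "\<And>i. i \<in> T \<Longrightarrow> norm (y i) \<le> 1 \<and> g i (y i) > onorm (g i) - e / card T"
    by metis
  have "(\<Sum>i\<in>T. onorm (g i)) - e = (\<Sum>i\<in>T. onorm (g i) - e / card T)"
    using T by (simp add: sum_subtractf)
  also have "\<dots> < (\<Sum>i\<in>T. g i (y i))"
    using T y by (intro sum_strict_mono) auto
  also have "\<dots> = F (\<Sum>i\<in>T. weighted_bcontfun (w i) (y i))"
    by (simp add: g_def linear_sum[OF bounded_linear.linear[OF F]])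
  also have "\<dots> \<le> onorm F"
    using y by (intro bounded_linear_le_onorm[OF F] norm_sum_weighted_bcontfun_le[OF w]) auto
  finally show "(\<Sum>i\<in>T. onorm (\<lambda>x. F (weighted_bcontfun (w i) x))) \<le> onorm F + e"
    by (simp add: g_def)
qed

lemma le_sum_comp_weighted_bcontfun:
  fixes F :: "('a::topological_space, 'b::real_normed_vector) bcontfun \<Rightarrow> real"
    and z :: "('a, 'b) bcontfun"
  assumes w: "partition_of_unity T w" and F: "bounded_linear F"
    and osc: "\<And>i t. i \<in> T \<Longrightarrow> w i t > 0 \<Longrightarrow> dist (z t) (z i) \<le> \<eta>"
  shows "F z \<le> (\<Sum>i\<in>T. F (weighted_bcontfun (w i) (z i))) + onorm F * \<eta>"
proof -
  have lin: "linear F" using F bounded_linear.linear by blast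
  have "F z - (\<Sum>i\<in>T. F (weighted_bcontfun (w i) (z i)))
      = F (z - (\<Sum>i\<in>T. weighted_bcontfun (w i) (z i)))"
    by (simp add: linear_diff[OF lin] linear_sum[OF lin])
  also have "\<dots> \<le> onorm F * norm (z - (\<Sum>i\<in>T. weighted_bcontfun (w i) (z i)))"
    using onorm[OF F] abs_le_iff by (metis real_norm_def)
  also have "\<dots> \<le> onorm F * \<eta>"
    by (intro mult_left_mono norm_diff_sum_weighted_bcontfun_le[OF w osc] onorm_pos_le[OF F])
  finally show ?thesis by simp
qed

text \<open>Pigeonhole on the deficits \<open>lam i - g z i\<close>: their total is less than \<open>m\<close> times the total of \<open>lam\<close>.\<close>
lemma exists_index_small_deficit:
  fixes lam :: "'i \<Rightarrow> real" and g :: "'z \<Rightarrow> 'i \<Rightarrow> real" and \<delta> :: real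
  assumes Z: "finite Z" "Z \<noteq> {}" and m: "0 < m"
    and g_le: "\<And>z i. z \<in> Z \<Longrightarrow> i \<in> T \<Longrightarrow> g z i \<le> lam i"
    and sum_lam: "(\<Sum>i\<in>T. lam i) \<le> 1"
    and sum_g: "\<And>z. z \<in> Z \<Longrightarrow> (\<Sum>i\<in>T. g z i) > 1 - \<delta>"
    and small: "card Z * \<delta> \<le> m * (1 - \<delta>)"
  obtains i where "i \<in> T" "0 < lam i" "\<And>z. z \<in> Z \<Longrightarrow> g z i > (1 - m) * lam i"
proof -
  define d where "d i = (\<Sum>z\<in>Z. lam i - g z i)" for i
  obtain z0 where "z0 \<in> Z" using Z(2) by blast
  have "1 - \<delta> < (\<Sum>i\<in>T. lam i)"
    using sum_g[OF \<open>z0 \<in> Z\<close>] sum_mono[of T "g z0" lam] g_le[OF \<open>z0 \<in> Z\<close>] by fastforce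
  have "(\<Sum>i\<in>T. d i) = (\<Sum>z\<in>Z. (\<Sum>i\<in>T. lam i) - (\<Sum>i\<in>T. g z i))"
    unfolding d_def by (subst sum.swap) (simp add: sum_subtractf)
  also have "\<dots> < (\<Sum>z\<in>Z. 1 - (1 - \<delta>))"
  proof (rule sum_strict_mono[OF Z])
    fix z assume "z \<in> Z"
    then show "(\<Sum>i\<in>T. lam i) - (\<Sum>i\<in>T. g z i) < 1 - (1 - \<delta>)"
      using sum_lam sum_g[of z] by linarith
  qed
  also have "\<dots> = card Z * \<delta>" by simp
  also have "\<dots> \<le> m * (\<Sum>i\<in>T. lam i)"
    using small m \<open>1 - \<delta> < (\<Sum>i\<in>T. lam i)\<close> by (smt (verit) mult_strict_left_mono)
  finally have "(\<Sum>i\<in>T. d i) < (\<Sum>i\<in>T. m * lam i)" by (simp add: sum_distrib_left)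
  then obtain i where i: "i \<in> T" "d i < m * lam i"
    using sum_mono[of T "\<lambda>i. m * lam i" d] by (meson not_less)
  have deficit: "lam i - g z i \<le> d i" if "z \<in> Z" for z
    unfolding d_def using Z(1) that g_le i(1) by (intro member_le_sum) auto
  have "0 \<le> d i" unfolding d_def using g_le i(1) by (intro sum_nonneg) auto
  with i have "0 < m * lam i" by linarith
  with m have "0 < lam i" by (simp add: zero_less_mult_iff)
  moreover have "g z i > (1 - m) * lam i" if "z \<in> Z" for z
    using deficit[OF that] i(2) by (simp add: algebra_simps)
  ultimately show thesis using that i(1) by blast
qed

lemma exists_functional_norming_values:
  fixes F :: "('a::topological_space, 'b::real_normed_vector) bcontfun \<Rightarrow> real"
    and Z :: "('a, 'b) bcontfun set"
  assumes w: "partition_of_unity T w" and F: "bounded_linear F" "onorm F \<le> 1"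
    and Z: "finite Z" "Z \<noteq> {}"
    and Z_norm: "\<And>z. z \<in> Z \<Longrightarrow> norm z \<le> 1"
    and Z_F: "\<And>z. z \<in> Z \<Longrightarrow> F z > 1 - \<eta>"
    and Z_osc: "\<And>z i t. z \<in> Z \<Longrightarrow> i \<in> T \<Longrightarrow> w i t > 0 \<Longrightarrow> dist (z t) (z i) \<le> \<eta>"
    and m: "0 < m" "real (card Z) * (2 * \<eta>) \<le> m * (1 - 2 * \<eta>)"
  obtains i f where "i \<in> T" "bounded_linear f" "onorm f = 1" "\<And>z. z \<in> Z \<Longrightarrow> f (z i) > 1 - m"
proof -
  define g where "g i = (\<lambda>x. F (weighted_bcontfun (w i) x))" for i
  have g: "bounded_linear (g i)" if "i \<in> T" for i
    unfolding g_def by (rule bounded_linear_comp_weighted_bcontfun[OF w that F(1)])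
  obtain z0 where "z0 \<in> Z" using Z(2) by blast
  then have "1 - \<eta> < onorm F"
    using Z_F bounded_linear_le_onorm[OF F(1) Z_norm] by fastforce
  then have \<eta>: "0 \<le> \<eta>" using F(2) by linarith
  have sum_g: "(\<Sum>i\<in>T. g i (z i)) > 1 - 2 * \<eta>" if "z \<in> Z" for z
  proof -
    have "F z \<le> (\<Sum>i\<in>T. g i (z i)) + onorm F * \<eta>"
      using le_sum_comp_weighted_bcontfun[OF w F(1) Z_osc[OF that]] by (simp add: g_def)
    moreover have "onorm F * \<eta> \<le> \<eta>"
      using F \<eta> by (simp add: mult_left_le_one_le onorm_pos_le)
    ultimately show ?thesis using Z_F[OF that] by linarith
  qed
  obtain i where i: "i \<in> T" "0 < onorm (g i)" and
    big: "\<And>z. z \<in> Z \<Longrightarrow> g i (z i) > (1 - m) * onorm (g i)"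
  proof (rule exists_index_small_deficit[where Z=Z and T=T and m=m and g="\<lambda>z i. g i (z i)" and lam="\<lambda>i. onorm (g i)" and \<delta>="2 * \<eta>"])
    show "g i (z i) \<le> onorm (g i)" if "z \<in> Z" "i \<in> T" for z i
      using Z_norm[OF that(1)] norm_bounded[of z i]
      by (intro bounded_linear_le_onorm[OF g[OF that(2)]]) linarith
    show "(\<Sum>i\<in>T. onorm (g i)) \<le> 1"
      using sum_onorm_comp_weighted_bcontfun_le[OF w F(1)] F(2) by (simp add: g_def)
  qed (use Z m sum_g in auto)
  define f where "f x = g i x / onorm (g i)" for x
  show thesis
  proof (rule that[OF i(1)])
    show "bounded_linear f"
      unfolding f_def by (rule bounded_linear_compose[OF bounded_linear_divide g[OF i(1)]])
    show "onorm f = 1"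
      using onorm_scaleR[OF g[OF i(1)], of "1 / onorm (g i)"] i(2) by (simp add: f_def[abs_def])
    show "f (z i) > 1 - m" if "z \<in> Z" for z
      using big[OF that] i(2) by (simp add: f_def less_divide_eq)
  qed
qed

lemma exists_functional_slice_values:
  fixes F :: "('a::topological_space, 'b::real_normed_vector) bcontfun \<Rightarrow> real"
  assumes K: "compact (UNIV :: 'a set)" and F: "bounded_linear F" "onorm F = 1"
    and \<eta>: "0 < \<eta>" "10 * \<eta> \<le> \<epsilon>" "10 * \<eta> \<le> 1"
    and x: "const_bcontfun x \<in> slice F \<eta>" and h: "h \<in> slice F \<eta>" and k: "k \<in> slice F \<eta>"
  obtains i f where "bounded_linear f" "onorm f = 1"
    "x \<in> slice f \<epsilon>" "h i \<in> slice f \<epsilon>" "k i \<in> slice f \<epsilon>"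
proof -
  have "continuous_on UNIV (\<lambda>t. (h t, k t))" by (intro continuous_intros) auto
  then obtain T w where w: "partition_of_unity T w"
    and close: "\<And>i t. i \<in> T \<Longrightarrow> w i t > 0 \<Longrightarrow> dist (h t, k t) (h i, k i) < \<eta>"
    using exists_partition_of_unity_dist[OF K _ \<eta>(1)] by blast
  define Z where "Z = {const_bcontfun x, h, k}"
  have Z_slice: "norm z \<le> 1" "F z > 1 - \<eta>" if "z \<in> Z" for z
    using that x h k by (auto simp: Z_def slice_def)
  have osc: "dist (z t) (z i) \<le> \<eta>" if "z \<in> Z" "i \<in> T" "w i t > 0" for z i t
    using that close[OF that(2,3)] \<eta>(1) dist_fst_le[of "(h t, k t)" "(h i, k i)"]
      dist_snd_le[of "(h t, k t)" "(h i, k i)"]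
    by (auto simp: Z_def)
  have "real (card Z) * (2 * \<eta>) \<le> 3 * (2 * \<eta>)"
    using \<eta>(1) by (intro mult_right_mono) (auto simp: Z_def card_insert_if)
  also have "\<dots> \<le> (10 * \<eta>) * (1 - 2 * \<eta>)" using \<eta> by (simp add: algebra_simps)
  finally have small: "real (card Z) * (2 * \<eta>) \<le> (10 * \<eta>) * (1 - 2 * \<eta>)" .
  obtain i f where "i \<in> T" and f: "bounded_linear f" "onorm f = 1"
    and f_Z: "\<And>z. z \<in> Z \<Longrightarrow> f (z i) > 1 - 10 * \<eta>"
  proof (rule exists_functional_norming_values[OF w F(1) _ _ _ _ _ osc _ small])
    show "norm z \<le> 1" "F z > 1 - \<eta>" if "z \<in> Z" for z using Z_slice[OF that] by auto
  qed (use \<eta>(1) F(2) in \<open>auto simp: Z_def\<close>)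
  have value_in_slice: "z i \<in> slice f \<epsilon>" if "z \<in> Z" for z
    using f_Z[OF that] \<eta>(2) order_trans[OF norm_bounded[of z i] Z_slice(1)[OF that]]
    by (simp add: slice_def)
  show thesis
  proof (rule that[OF f])
    show "x \<in> slice f \<epsilon>" using value_in_slice[of "const_bcontfun x"] by (simp add: Z_def)
    show "h i \<in> slice f \<epsilon>" "k i \<in> slice f \<epsilon>" using value_in_slice by (simp_all add: Z_def)
  qed
qed

lemma prop_ss_of_bcontfun:
  assumes K: "compact (UNIV :: 'a::topological_space set)"
    and P: "prop_ss TYPE(('a, 'b::real_normed_vector) bcontfun)"
  shows "prop_ss TYPE('b)"
  unfolding prop_ss_def
proof (intro allI impI)
  fix x1 x2 :: 'b and \<epsilon> :: real
  assume n1: "norm x1 = 1" and n2: "norm x2 = 1" and \<epsilon>: "\<epsilon> > 0"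
  define \<eta> where "\<eta> = min \<epsilon> 1 / 10"
  have \<eta>: "0 < \<eta>" "10 * \<eta> \<le> \<epsilon>" "10 * \<eta> \<le> 1" using \<epsilon> by (auto simp: \<eta>_def)
  define c1 where "c1 = (const_bcontfun x1 :: ('a, 'b) bcontfun)"
  define c2 where "c2 = (const_bcontfun x2 :: ('a, 'b) bcontfun)"
  have "norm c1 = 1" "norm c2 = 1" using n1 n2 by (simp_all add: c1_def c2_def norm_const_bcontfun)
  from P[unfolded prop_ss_def, rule_format, OF this \<eta>(1)] obtain F :: "('a, 'b) bcontfun \<Rightarrow> real"
    where F: "bounded_linear F" "onorm F = 1" and c1: "c1 \<in> slice F \<eta>"
      and c2: "infdist c2 (slice F \<eta>) + infdist c2 (uminus ` slice F \<eta>) < 2 + \<eta>"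
    by blast
  obtain h k' where h: "h \<in> slice F \<eta>" and k': "k' \<in> uminus ` slice F \<eta>"
    and hk': "dist c2 h + dist c2 k' < 2 + \<eta>"
  proof (rule infdist_add_lessE[OF _ _ c2])
    show "slice F \<eta> \<noteq> {}" "uminus ` slice F \<eta> \<noteq> {}" using c1 by blast+
  qed
  from k' obtain k where k'_def: "k' = - k" and k: "k \<in> slice F \<eta>" by (rule imageE)
  obtain i f where f: "bounded_linear f" "onorm f = 1" and "x1 \<in> slice f \<epsilon>"
    and hi: "h i \<in> slice f \<epsilon>" and ki: "k i \<in> slice f \<epsilon>"
    using exists_functional_slice_values[OF K F \<eta> c1[unfolded c1_def] h k] by blast
  have "infdist x2 (slice f \<epsilon>) \<le> dist c2 h"
  proof -
    have "infdist x2 (slice f \<epsilon>) \<le> dist x2 (h i)" by (rule infdist_le[OF hi])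
    also have "\<dots> \<le> dist c2 h" using dist_bounded[of c2 i h] by (simp add: c2_def)
    finally show ?thesis .
  qed
  moreover have "infdist x2 (uminus ` slice f \<epsilon>) \<le> dist c2 k'"
  proof -
    have "infdist x2 (uminus ` slice f \<epsilon>) \<le> dist x2 (- k i)"
      by (rule infdist_le) (use ki in blast)
    also have "\<dots> \<le> dist c2 k'" using dist_bounded[of c2 i k'] by (simp add: c2_def k'_def)
    finally show ?thesis .
  qed
  ultimately show "\<exists>f. bounded_linear f \<and> onorm f = 1 \<and> x1 \<in> slice f \<epsilon> \<and>
      infdist x2 (slice f \<epsilon>) + infdist x2 (uminus ` slice f \<epsilon>) < 2 + \<epsilon>"
    using f \<open>x1 \<in> slice f \<epsilon>\<close> hk' \<eta> by (intro exI[of _ f]) auto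
qed

theorem theorem2p1:
  assumes "compact (UNIV :: 'k::t2_space set)"
  shows "prop_ss TYPE('x::banach) \<longleftrightarrow> prop_ss TYPE(('k, 'x) bcontfun)"
  using prop_ss_bcontfun[OF assms] prop_ss_of_bcontfun[OF assms] by blast

end
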